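(* Let $G=(V,\Sigma,R,S)$ be a context-free grammar in Greibach Normal Form. For all $w,z\in\Sigma^*$: if $\pi_S(w)=\pi_S(z)$, then $w\backslash L(G)=z\backslash L(G)$.
   Context: A context-free grammar $G=(V,\Sigma,R,S)$ in Greibach Normal Form has every production of the form $S\to\epsilon$ or $A\to a\,\beta$ with $a\in\Sigma$, $\beta\in(V\setminus\{S\})^*$; $L(G)$ is its language. Let $\delta_G(a,A)=\{\beta\in V^*:(A\to a\,\beta)\in R\}$. Define $\pi:\Sigma^*\times V^*\to\mathcal{P}(V^* )$ recursively by $\pi(t,\alpha)=\{\alpha\}$ if $t=\epsilon$; $\pi(t,\alpha)=\emptyset$ if $t\neq\epsilon$ and $\alpha=\epsilon$; and otherwise $\pi(t,\alpha)=\bigcup_{\beta\in\delta_G(t_0,\alpha_0)}\pi(t_{1:},\beta\alpha_{1:})$, where $t_0$ is the first character of $t$, $t_{1:}$ the rest of $t$, $\alpha_0$ the first symbol of $\alpha$ and $\alpha_{1:}$ the rest of $\alpha$. Let $\pi_S(t)=\pi(t,S)$ (the stack consisting of the single symbol $S$). A string $x$ belongs to $L(G)$ iff $\epsilon\in\pi_S(x)$. The left quotient of a language $L$ by $w\in\Sigma^*$ is $w\backslash L=\{z\in\Sigma^*: wz\in L\}$. *)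

theory Defs
  imports Main
begin

datatype ('n, 'a) sym = NT 'n | T 'a

text \<open>A context-free grammar (V, Sigma, R, S): nonterminals of type 'n (V = UNIV or the set
  of nonterminals occurring), terminals of type 'a, a finite set of productions, start symbol.\<close>
record ('n, 'a) cfg =
  prods :: "('n \<times> ('n, 'a) sym list) set"
  start :: 'n

inductive derive1 :: "('n, 'a) cfg \<Rightarrow> ('n, 'a) sym list \<Rightarrow> ('n, 'a) sym list \<Rightarrow> bool"
  for G where
  "(A, \<gamma>) \<in> prods G \<Longrightarrow> derive1 G (u @ [NT A] @ v) (u @ \<gamma> @ v)"

definition lang :: "('n, 'a) cfg \<Rightarrow> 'a list set" where
  "lang G = {w. (derive1 G)\<^sup>*\<^sup>* [NT (start G)] (map T w)}"

definition gnf :: "('n, 'a) cfg \<Rightarrow> bool" where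
  "gnf G \<longleftrightarrow> finite (prods G) \<and>
     (\<forall>(A, \<gamma>) \<in> prods G.
        (A = start G \<and> \<gamma> = []) \<or>
        (\<exists>a \<beta>. \<gamma> = T a # map NT \<beta> \<and> start G \<notin> set \<beta>))"

definition delta :: "('n, 'a) cfg \<Rightarrow> 'a \<Rightarrow> 'n \<Rightarrow> 'n list set" where
  "delta G a A = {\<beta>. (A, T a # map NT \<beta>) \<in> prods G}"

fun pi :: "('n, 'a) cfg \<Rightarrow> 'a list \<Rightarrow> 'n list \<Rightarrow> 'n list set" where
  "pi G [] \<alpha> = {\<alpha>}"
| "pi G (t # ts) [] = {}"
| "pi G (t # ts) (A # \<alpha>) = (\<Union>\<beta> \<in> delta G t A. pi G ts (\<beta> @ \<alpha>))"

definition pi_S :: "('n, 'a) cfg \<Rightarrow> 'a list \<Rightarrow> 'n list set" where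
  "pi_S G t = pi G t [start G]"

definition left_quotient :: "'a list \<Rightarrow> 'a list set \<Rightarrow> 'a list set" where
  "left_quotient w L = {z. w @ z \<in> L}"

end

theory Submission
  imports Defs
begin

text \<open>In Greibach Normal Form a derivation of a nonempty word is a leftmost derivation that
  emits one terminal per step, and \<pi> records exactly the stacks of nonterminals left over.
  Hence a nonempty x lies in L(G) iff \<epsilon> \<in> \<pi>_S(x), and since \<pi>_S(xy) is the union of
  \<pi>(y, \<beta>) over \<beta> \<in> \<pi>_S(x), membership of xy depends on x only through \<pi>_S(x).
  The empty word, the only one that may use S \<rightarrow> \<epsilon>, needs separate care: S never
  reappears on a stack after the first step, so [S] \<in> \<pi>_S(x) only for x = \<epsilon>, and
  \<pi>_S(w) = \<pi>_S(z) forces w and z to be both empty or both nonempty.\<close>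

inductive generates :: "('n, 'a) cfg \<Rightarrow> ('n, 'a) sym list \<Rightarrow> 'a list \<Rightarrow> bool" for G where
  Nil: "generates G [] []"
| T: "generates G xs w \<Longrightarrow> generates G (T a # xs) (a # w)"
| NT: "(A, \<gamma>) \<in> prods G \<Longrightarrow> generates G \<gamma> u \<Longrightarrow> generates G xs v \<Longrightarrow>
    generates G (NT A # xs) (u @ v)"

lemma generates_Nil_iff [simp]: "generates G [] w \<longleftrightarrow> w = []"
  by (auto elim: generates.cases intro: generates.Nil)

lemma generates_append:
  "generates G xs u \<Longrightarrow> generates G ys v \<Longrightarrow> generates G (xs @ ys) (u @ v)"
proof (induction xs u rule: generates.induct)
  case Nil
  then show ?case by simp
next
  case (T xs w a)
  then show ?case by (simp add: generates.T)
next
  case (NT A \<gamma> u' xs v')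
  then have "generates G (NT A # xs @ ys) (u' @ v' @ v)" by (simp add: generates.NT)
  then show ?case by simp
qed

lemma generates_appendE:
  assumes "generates G (xs @ ys) w"
  obtains u v where "w = u @ v" "generates G xs u" "generates G ys v"
proof -
  from assms have "\<exists>u v. w = u @ v \<and> generates G xs u \<and> generates G ys v"
  proof (induction xs arbitrary: w)
    case Nil
    then show ?case by simp
  next
    case (Cons x xs)
    from Cons.prems show ?case
    proof cases
      case (T xs' w' a)
      from Cons.IH[of w'] T obtain u v where "w' = u @ v" "generates G xs u" "generates G ys v"
        by auto
      with T show ?thesis by (intro exI[of _ "a # u"] exI[of _ v]) (simp add: generates.T)
    next
      case (NT A \<gamma> u' xs' w')
      from Cons.IH[of w'] NT obtain u v where "w' = u @ v" "generates G xs u" "generates G ys v"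
        by auto
      with NT show ?thesis by (intro exI[of _ "u' @ u"] exI[of _ v]) (simp add: generates.NT)
    qed simp
  qed
  with that show thesis by blast
qed

lemma generates_map_T: "generates G (map T w) w"
  by (induction w) (simp_all add: generates.T)

lemma derives_imp_generates:
  assumes "(derive1 G)\<^sup>*\<^sup>* xs (map T w)"
  shows "generates G xs w"
  using assms
proof (induction rule: converse_rtranclp_induct)
  case base
  show ?case by (rule generates_map_T)
next
  case (step xs ys)
  from step.hyps(1) obtain u A v \<gamma>
    where xs: "xs = u @ [NT A] @ v" and ys: "ys = u @ \<gamma> @ v" and prod: "(A, \<gamma>) \<in> prods G"
    by (auto elim: derive1.cases)
  from step.IH obtain w\<^sub>1 w\<^sub>2 where "w = w\<^sub>1 @ w\<^sub>2" and "generates G u w\<^sub>1"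
    and "generates G (\<gamma> @ v) w\<^sub>2"
    unfolding ys by (rule generates_appendE)
  moreover from this(3) obtain w\<^sub>3 w\<^sub>4 where "w\<^sub>2 = w\<^sub>3 @ w\<^sub>4" "generates G \<gamma> w\<^sub>3" "generates G v w\<^sub>4"
    by (rule generates_appendE)
  ultimately show ?case
    unfolding xs using prod by (simp add: generates_append generates.NT)
qed

lemma derives_append_left:
  "(derive1 G)\<^sup>*\<^sup>* u v \<Longrightarrow> (derive1 G)\<^sup>*\<^sup>* (p @ u) (p @ v)"
proof (induction rule: rtranclp_induct)
  case base
  show ?case by simp
next
  case (step v v')
  from step.hyps(2) have "derive1 G (p @ v) (p @ v')"
    by cases (metis append.assoc derive1.intros)
  with step.IH show ?case by simp
qed

lemma pi_imp_derives:
  assumes "\<gamma> \<in> pi G y \<alpha>"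
  shows "(derive1 G)\<^sup>*\<^sup>* (map NT \<alpha>) (map T y @ map NT \<gamma>)"
  using assms
proof (induction y arbitrary: \<alpha>)
  case Nil
  then show ?case by simp
next
  case (Cons a y)
  then obtain A \<alpha>' \<beta> where \<alpha>: "\<alpha> = A # \<alpha>'"
    and \<beta>: "\<beta> \<in> delta G a A" "\<gamma> \<in> pi G y (\<beta> @ \<alpha>')"
    by (cases \<alpha>) auto
  from \<beta>(1) have "derive1 G ([] @ [NT A] @ map NT \<alpha>') ([] @ (T a # map NT \<beta>) @ map NT \<alpha>')"
    by (intro derive1.intros) (simp add: delta_def)
  moreover have "(derive1 G)\<^sup>*\<^sup>* ([T a] @ map NT (\<beta> @ \<alpha>')) ([T a] @ map T y @ map NT \<gamma>)"
    using Cons.IH[OF \<beta>(2)] by (rule derives_append_left)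
  ultimately show ?case
    unfolding \<alpha> by (simp add: converse_rtranclp_into_rtranclp)
qed

lemma pi_append: "pi G (x @ y) \<alpha> = (\<Union>\<beta> \<in> pi G x \<alpha>. pi G y \<beta>)"
proof (induction x arbitrary: \<alpha>)
  case Nil
  then show ?case by simp
next
  case (Cons a x)
  then show ?case by (cases \<alpha>) auto
qed

lemma pi_S_append: "pi_S G (x @ y) = (\<Union>\<beta> \<in> pi_S G x. pi G y \<beta>)"
  by (simp add: pi_S_def pi_append)

lemma gnf_prodD:
  assumes "gnf G" "(A, \<gamma>) \<in> prods G"
  shows "A = start G \<and> \<gamma> = [] \<or> (\<exists>a \<beta>. \<gamma> = T a # map NT \<beta> \<and> start G \<notin> set \<beta>)"
  using assms unfolding gnf_def by blast

lemma start_notin_delta: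
  assumes "gnf G" "\<beta> \<in> delta G a A"
  shows "start G \<notin> set \<beta>"
proof -
  from assms(2) have "(A, T a # map NT \<beta>) \<in> prods G" by (simp add: delta_def)
  from gnf_prodD[OF assms(1) this] show ?thesis
    using inj_map_eq_map[of NT] by (auto simp: inj_def)
qed

lemma generates_nonempty_prod_gnfE:
  assumes "gnf G" "(A, \<gamma>) \<in> prods G" "\<gamma> \<noteq> []" "generates G \<gamma> y"
  obtains a \<beta> y' where "y = a # y'" "\<beta> \<in> delta G a A" "generates G (map NT \<beta>) y'"
proof -
  from gnf_prodD[OF assms(1,2)] assms(3) obtain a \<beta> where \<gamma>: "\<gamma> = T a # map NT \<beta>"
    by auto
  with assms(2) have \<beta>: "\<beta> \<in> delta G a A" by (simp add: delta_def)
  from assms(4) obtain y' where "y = a # y'" "generates G (map NT \<beta>) y'"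
    unfolding \<gamma> by cases simp_all
  with \<beta> show thesis using that by simp
qed

lemma generates_imp_pi:
  assumes "gnf G" "generates G (map NT \<alpha>) y" "start G \<notin> set \<alpha>"
  shows "[] \<in> pi G y \<alpha>"
  using assms(2,3)
proof (induction y arbitrary: \<alpha> rule: length_induct)
  case (1 y)
  show ?case
  proof (cases \<alpha>)
    case Nil
    with "1.prems"(1) show ?thesis by simp
  next
    case (Cons A \<alpha>')
    from "1.prems"(1) obtain \<gamma> u v where y: "y = u @ v" and prod: "(A, \<gamma>) \<in> prods G"
      and u: "generates G \<gamma> u" and v: "generates G (map NT \<alpha>') v"
      unfolding Cons by (auto elim: generates.cases)
    from "1.prems"(2) Cons have "A \<noteq> start G" by auto
    with gnf_prodD[OF assms(1) prod] have "\<gamma> \<noteq> []" by auto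
    from assms(1) prod this u obtain a \<beta> u'
      where u': "u = a # u'" and \<beta>: "\<beta> \<in> delta G a A" "generates G (map NT \<beta>) u'"
      by (rule generates_nonempty_prod_gnfE)
    have "generates G (map NT (\<beta> @ \<alpha>')) (u' @ v)"
      using generates_append[OF \<beta>(2) v] by simp
    moreover have "start G \<notin> set (\<beta> @ \<alpha>')"
      using start_notin_delta[OF assms(1) \<beta>(1)] Cons "1.prems"(2) by simp
    ultimately have "[] \<in> pi G (u' @ v) (\<beta> @ \<alpha>')"
      using "1.IH" y u' by simp
    with \<beta>(1) show ?thesis
      unfolding Cons y u' by auto
  qed
qed

lemma lang_iff_Nil_in_pi_S:
  assumes "gnf G" "x \<noteq> []"
  shows "x \<in> lang G \<longleftrightarrow> [] \<in> pi_S G x"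
proof
  assume "x \<in> lang G"
  then have "(derive1 G)\<^sup>*\<^sup>* [NT (start G)] (map T x)" by (simp add: lang_def)
  then have "generates G [NT (start G)] x" by (rule derives_imp_generates)
  then obtain \<gamma> where prod: "(start G, \<gamma>) \<in> prods G" and x: "generates G \<gamma> x"
    by cases simp
  from x assms(2) have "\<gamma> \<noteq> []" by auto
  from assms(1) prod this x obtain a \<beta> x'
    where x': "x = a # x'" and \<beta>: "\<beta> \<in> delta G a (start G)" "generates G (map NT \<beta>) x'"
    by (rule generates_nonempty_prod_gnfE)
  have "[] \<in> pi G x' \<beta>"
    using generates_imp_pi[OF assms(1) \<beta>(2) start_notin_delta[OF assms(1) \<beta>(1)]] .
  with \<beta>(1) show "[] \<in> pi_S G x"
    unfolding x' pi_S_def by auto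
next
  assume "[] \<in> pi_S G x"
  then show "x \<in> lang G"
    using pi_imp_derives[of "[]" G x "[start G]"] by (simp add: pi_S_def lang_def)
qed

lemma start_notin_pi:
  assumes "gnf G" "start G \<notin> set \<alpha>" "\<gamma> \<in> pi G y \<alpha>"
  shows "start G \<notin> set \<gamma>"
  using assms(2,3)
proof (induction y arbitrary: \<alpha>)
  case Nil
  then show ?case by simp
next
  case (Cons a y)
  then obtain A \<alpha>' \<beta> where \<alpha>: "\<alpha> = A # \<alpha>'"
    and \<beta>: "\<beta> \<in> delta G a A" "\<gamma> \<in> pi G y (\<beta> @ \<alpha>')"
    by (cases \<alpha>) auto
  from Cons.prems(1) \<alpha> start_notin_delta[OF assms(1) \<beta>(1)]
  have "start G \<notin> set (\<beta> @ \<alpha>')" by simp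
  then show ?case using \<beta>(2) by (rule Cons.IH)
qed

lemma start_in_pi_S_iff:
  assumes "gnf G"
  shows "[start G] \<in> pi_S G x \<longleftrightarrow> x = []"
proof
  assume start: "[start G] \<in> pi_S G x"
  show "x = []"
  proof (rule ccontr)
    assume "x \<noteq> []"
    with start obtain a x' \<beta> where \<beta>: "\<beta> \<in> delta G a (start G)" "[start G] \<in> pi G x' \<beta>"
      by (cases x) (auto simp: pi_S_def)
    from start_notin_pi[OF assms start_notin_delta[OF assms \<beta>(1)] \<beta>(2)] show False
      by simp
  qed
qed (simp add: pi_S_def)

theorem lemma2:
  fixes G :: "('n, 'a) cfg" and w z :: "'a list"
  assumes "gnf G"
    and "pi_S G w = pi_S G z"
  shows "left_quotient w (lang G) = left_quotient z (lang G)"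
proof -
  from assms have "w = [] \<longleftrightarrow> z = []"
    using start_in_pi_S_iff by metis
  then have "w @ y \<in> lang G \<longleftrightarrow> z @ y \<in> lang G" for y
    using assms by (cases "w = []") (simp_all add: lang_iff_Nil_in_pi_S pi_S_append)
  then show ?thesis by (simp add: left_quotient_def)
qed

end
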